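(* Under the standing assumptions below, let $\{x_n\}\subset X$ and $\{G_n\}\subset\mathcal{L}(X,Y)$ be sequences with $x_n\to x$ in $X$ for some $x\in X$, $G_n\in\partial_B^{sw}S(x_n)$ for all $n\in\mathbb{N}$, and $G_n\to G$ in the weak operator topology of $\mathcal{L}(X,Y)$ for some $G\in\mathcal{L}(X,Y)$. Then $G\in\partial_B^{sw}S(x)$.
   Context: Standing assumptions: $(\Omega,\Sigma,\mu)$ is a complete measure space with real Lebesgue spaces $L^p(\Omega)$, $p\in[1,\infty]$. $Y$ is a real separable reflexive Banach space with $Y\subset L^q(\Omega)$ and the inclusion $Y\hookrightarrow L^q(\Omega)$ continuous and compact, for a fixed $q\in[1,\infty]$. $X$ is a real separable Banach space. $U$ is a real reflexive Banach space with $U\subset X$ and the inclusion $U\hookrightarrow X$ continuous and compact. The map $S:X\to Y$ satisfies $S(\lambda x_1+(1-\lambda)x_2)\le\lambda S(x_1)+(1-\lambda)S(x_2)$ $\mu$-a.e. in $\Omega$ for all $x_1,x_2\in X$, $\lambda\in[0,1]$; and there is an exponent $r\in[1,\infty]$ such that for every $x\in X$ there are $C,\varepsilon>0$ with $\|S(x_1)-S(x_2)\|_Y\le C\|x_1-x_2\|_X$ for all $x_1,x_2\in X$ with $\|x_i-x\|_X\le\varepsilon$, $i=1,2$, and $\|S(x_1+z)-S(x_1)\|_{L^r(\Omega)}\le C\|z\|_U$ for all $x_1\in X$, $z\in U$ with $\|x_1-x\|_X\le\varepsilon$, $\|z\|_U\le\varepsilon$. $S$ is Gâteaux differentiable at $x\in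 X$ if for all $z\in X$ the limit $S'(x;z):=\lim_{t\to0^+}(S(x+tz)-S(x))/t$ exists in $Y$ and $z\mapsto S'(x;z)$ is linear and continuous; then $S'(x):=S'(x;\cdot)\in\mathcal{L}(X,Y)$. $\mathcal{D}_S$ denotes the set of points where $S$ is Gâteaux differentiable (it is known to be dense in $X$). WOT convergence $G_n\to G$ in $\mathcal{L}(X,Y)$ means $G_nz\rightharpoonup Gz$ weakly in $Y$ for all $z\in X$. The strong-weak Bouligand differential is $\partial_B^{sw}S(x):=\{G\in\mathcal{L}(X,Y): \exists\{x_n\}\subset\mathcal{D}_S \text{ with } x_n\to x \text{ in } X \text{ and } S'(x_n)\to G \text{ in the WOT}\}$. *)

theory Defs
  imports "HOL-Analysis.Analysis" "HOL-Probability.Probability"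
begin

definition separable_type :: "'a::metric_space itself \<Rightarrow> bool" where
  "separable_type _ \<longleftrightarrow> separable_space (euclidean :: 'a topology)"

definition reflexive_type :: "'a::real_normed_vector itself \<Rightarrow> bool" where
  "reflexive_type _ \<longleftrightarrow>
     (\<forall>\<Phi> :: ('a \<Rightarrow>\<^sub>L real) \<Rightarrow>\<^sub>L real. \<exists>a::'a. \<forall>f. blinfun_apply \<Phi> f = blinfun_apply f a)"

definition weakly_tendsto :: "(nat \<Rightarrow> 'a::real_normed_vector) \<Rightarrow> 'a \<Rightarrow> bool" where
  "weakly_tendsto ys y \<longleftrightarrow>
     (\<forall>f :: 'a \<Rightarrow>\<^sub>L real. (\<lambda>n. blinfun_apply f (ys n)) \<longlonglongrightarrow> blinfun_apply f y)"

definition wot_tendsto ::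
  "(nat \<Rightarrow> ('x::real_normed_vector \<Rightarrow>\<^sub>L 'y::real_normed_vector)) \<Rightarrow> ('x \<Rightarrow>\<^sub>L 'y) \<Rightarrow> bool" where
  "wot_tendsto Gs G \<longleftrightarrow> (\<forall>z. weakly_tendsto (\<lambda>n. blinfun_apply (Gs n) z) (blinfun_apply G z))"

text \<open>The L^p(M) norm of a real function (p in [1,\<infinity>]), valued in ennreal so that
  the value \<infinity> means "not in L^p". For p = \<infinity> it is the essential supremum of |f|.\<close>
definition Lp_norm :: "'w measure \<Rightarrow> ennreal \<Rightarrow> ('w \<Rightarrow> real) \<Rightarrow> ennreal" where
  "Lp_norm M p f =
     (if p = \<infinity> then esssup M (\<lambda>w. ennreal \<bar>f w\<bar>)
      else (let I = (\<integral>\<^sup>+ w. ennreal (\<bar>f w\<bar> powr enn2real p) \<partial>M)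
            in if I = \<infinity> then \<infinity> else ennreal (enn2real I powr (1 / enn2real p))))"

definition in_Lp :: "'w measure \<Rightarrow> ennreal \<Rightarrow> ('w \<Rightarrow> real) \<Rightarrow> bool" where
  "in_Lp M p f \<longleftrightarrow> f \<in> borel_measurable M \<and> Lp_norm M p f < \<infinity>"

text \<open>Y is (identified with) a subspace of L^q(M) via \<iota>, with continuous and compact inclusion.
  \<iota> y is a representative of the equivalence class of y; \<iota> is linear modulo a.e. equality
  and injective modulo a.e. equality.\<close>
definition compact_Lq_embedding ::
  "'w measure \<Rightarrow> ennreal \<Rightarrow> ('y::real_normed_vector \<Rightarrow> 'w \<Rightarrow> real) \<Rightarrow> bool" where
  "compact_Lq_embedding M q \<iota> \<longleftrightarrow>
     (\<forall>y. in_Lp M q (\<iota> y)) \<and>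
     (\<forall>a b y1 y2. AE w in M. \<iota> (a *\<^sub>R y1 + b *\<^sub>R y2) w = a * \<iota> y1 w + b * \<iota> y2 w) \<and>
     (\<forall>y1 y2. (AE w in M. \<iota> y1 w = \<iota> y2 w) \<longrightarrow> y1 = y2) \<and>
     (\<exists>C::real. \<forall>y. Lp_norm M q (\<iota> y) \<le> ennreal (C * norm y)) \<and>
     (\<forall>ys :: nat \<Rightarrow> 'y. bounded (range ys) \<longrightarrow>
        (\<exists>(r :: nat \<Rightarrow> nat) g. strict_mono r \<and> in_Lp M q g \<and>
               (\<lambda>k. Lp_norm M q (\<lambda>w. \<iota> (ys (r k)) w - g w)) \<longlonglongrightarrow> 0))"

definition compact_embedding :: "('u::real_normed_vector \<Rightarrow> 'x::real_normed_vector) \<Rightarrow> bool" where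
  "compact_embedding j \<longleftrightarrow>
     bounded_linear j \<and> inj j \<and>
     (\<forall>us. bounded (range us) \<longrightarrow> (\<exists>(r :: nat \<Rightarrow> nat) v. strict_mono r \<and> (\<lambda>k. j (us (r k))) \<longlonglongrightarrow> v))"

definition gateaux_deriv :: "('x::real_normed_vector \<Rightarrow> 'y::real_normed_vector) \<Rightarrow> 'x \<Rightarrow> ('x \<Rightarrow>\<^sub>L 'y) \<Rightarrow> bool" where
  "gateaux_deriv S x G \<longleftrightarrow>
     (\<forall>z. ((\<lambda>t. (1 / t) *\<^sub>R (S (x + t *\<^sub>R z) - S x)) \<longlongrightarrow> blinfun_apply G z) (at_right (0::real)))"

definition gateaux_points :: "('x::real_normed_vector \<Rightarrow> 'y::real_normed_vector) \<Rightarrow> 'x set" where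
  "gateaux_points S = {x. \<exists>G. gateaux_deriv S x G}"

definition gateaux_derivative :: "('x::real_normed_vector \<Rightarrow> 'y::real_normed_vector) \<Rightarrow> 'x \<Rightarrow> ('x \<Rightarrow>\<^sub>L 'y)" where
  "gateaux_derivative S x = (THE G. gateaux_deriv S x G)"

definition bouligand_sw :: "('x::real_normed_vector \<Rightarrow> 'y::real_normed_vector) \<Rightarrow> 'x \<Rightarrow> ('x \<Rightarrow>\<^sub>L 'y) set" where
  "bouligand_sw S x = {G. \<exists>xs. (\<forall>n. xs n \<in> gateaux_points S) \<and> xs \<longlonglongrightarrow> x \<and>
                            wot_tendsto (\<lambda>n. gateaux_derivative S (xs n)) G}"

definition standing_assumptions ::
  "'w measure \<Rightarrow> ennreal \<Rightarrow> ennreal \<Rightarrow> ('y::banach \<Rightarrow> 'w \<Rightarrow> real) \<Rightarrow>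
   ('u::banach \<Rightarrow> 'x::banach) \<Rightarrow> ('x \<Rightarrow> 'y) \<Rightarrow> bool" where
  "standing_assumptions M q r \<iota> j S \<longleftrightarrow>
     complete_measure M \<and>
     1 \<le> q \<and> 1 \<le> r \<and>
     separable_type TYPE('y) \<and> reflexive_type TYPE('y) \<and> compact_Lq_embedding M q \<iota> \<and>
     separable_type TYPE('x) \<and>
     reflexive_type TYPE('u) \<and> compact_embedding j \<and>
     (\<forall>x1 x2 lam. 0 \<le> lam \<and> lam \<le> (1::real) \<longrightarrow>
        (AE w in M. \<iota> (S (lam *\<^sub>R x1 + (1 - lam) *\<^sub>R x2)) w
                      \<le> lam * \<iota> (S x1) w + (1 - lam) * \<iota> (S x2) w)) \<and>
     (\<forall>x. \<exists>C>0. \<exists>\<epsilon>>0.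
        (\<forall>x1 x2. norm (x1 - x) \<le> \<epsilon> \<and> norm (x2 - x) \<le> \<epsilon> \<longrightarrow>
                  norm (S x1 - S x2) \<le> C * norm (x1 - x2)) \<and>
        (\<forall>x1 z. norm (x1 - x) \<le> \<epsilon> \<and> norm z \<le> \<epsilon> \<longrightarrow>
                  Lp_norm M r (\<lambda>w. \<iota> (S (x1 + j z)) w - \<iota> (S x1) w) \<le> ennreal (C * norm z)))"

end

theory Submission
  imports Defs
begin

(*
  A Gateaux point near x_n whose derivative is close to G_n on finitely many test pairs exists
  because G_n is a strong-weak limit of derivatives at points converging to x_n. Taking a
  diagonal sequence over countably many test pairs (z_i, f_k), with z_i dense in X and the f_k
  spanning a dense subspace of Y' (which exists since Y is separable and reflexive, by
  Hahn-Banach), gives Gateaux points converging to x whose derivatives converge to G on every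
  test pair. Near x the map S is Lipschitz, so these derivatives are uniformly bounded, and a
  uniformly bounded sequence that converges on a dense set of directions against a total set of
  functionals converges in the weak operator topology.
*)

section \<open>Hahn-Banach for sublinear functionals\<close>

text \<open>Partial linear functionals are represented by their graphs, so that Zorn's lemma applies
  to the subset order.\<close>
definition dominated_linear_graph :: "('a::real_vector \<Rightarrow> real) \<Rightarrow> ('a \<times> real) set \<Rightarrow> bool" where
  "dominated_linear_graph p Gr \<longleftrightarrow>
     (\<forall>x a b. (x, a) \<in> Gr \<longrightarrow> (x, b) \<in> Gr \<longrightarrow> a = b) \<and>
     (0, 0) \<in> Gr \<and>
     (\<forall>x a y b. (x, a) \<in> Gr \<longrightarrow> (y, b) \<in> Gr \<longrightarrow> (x + y, a + b) \<in> Gr) \<and>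
     (\<forall>c x a. (x, a) \<in> Gr \<longrightarrow> (c *\<^sub>R x, c * a) \<in> Gr) \<and>
     (\<forall>x a. (x, a) \<in> Gr \<longrightarrow> a \<le> p x)"

definition graph_extension :: "('a::real_vector \<times> real) set \<Rightarrow> 'a \<Rightarrow> real \<Rightarrow> ('a \<times> real) set" where
  "graph_extension Gr v c = {(x + t *\<^sub>R v, a + t * c) | x a t. (x, a) \<in> Gr}"

lemma graph_extensionI: "(x, a) \<in> Gr \<Longrightarrow> (x + t *\<^sub>R v, a + t * c) \<in> graph_extension Gr v c"
  unfolding graph_extension_def by blast

lemma graph_extensionE:
  assumes "(z, b) \<in> graph_extension Gr v c"
  obtains x a t where "z = x + t *\<^sub>R v" "b = a + t * c" "(x, a) \<in> Gr"
  using assms unfolding graph_extension_def by blast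

lemma subset_graph_extension: "Gr \<subseteq> graph_extension Gr v c"
  using graph_extensionI[where t = 0] by auto

locale sublinear =
  fixes p :: "'a::real_vector \<Rightarrow> real"
  assumes subadditive: "\<And>x y. p (x + y) \<le> p x + p y"
    and positive_homogeneous: "\<And>c x. 0 \<le> c \<Longrightarrow> p (c *\<^sub>R x) = c * p x"
begin

lemma zero [simp]: "p 0 = 0"
  using positive_homogeneous[of 0 0] by simp

context
  fixes Gr assumes Gr: "dominated_linear_graph p Gr"
begin

lemma graph_unique: "(x, a) \<in> Gr \<Longrightarrow> (x, b) \<in> Gr \<Longrightarrow> a = b"
  and graph_zero: "(0, 0) \<in> Gr"
  and graph_add: "(x, a) \<in> Gr \<Longrightarrow> (y, b) \<in> Gr \<Longrightarrow> (x + y, a + b) \<in> Gr"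
  and graph_scaleR: "(x, a) \<in> Gr \<Longrightarrow> (c *\<^sub>R x, c * a) \<in> Gr"
  and graph_le: "(x, a) \<in> Gr \<Longrightarrow> a \<le> p x"
  using Gr unfolding dominated_linear_graph_def by blast+

text \<open>Any value \<open>c\<close> between these bounds may be assigned to the new direction \<open>v\<close>; the
  bounds are compatible because \<open>a + b \<le> p (x + y) \<le> p (x - v) + p (y + v)\<close>.\<close>
lemma extension_value_exists:
  obtains c where "\<And>x a. (x, a) \<in> Gr \<Longrightarrow> a - p (x - v) \<le> c"
    and "\<And>x a. (x, a) \<in> Gr \<Longrightarrow> c \<le> p (x + v) - a"
proof -
  define A where "A = {a - p (x - v) | x a. (x, a) \<in> Gr}"
  have squeeze: "a - p (x - v) \<le> p (y + v) - b" if "(x, a) \<in> Gr" "(y, b) \<in> Gr" for x a y b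
  proof -
    have "a + b \<le> p ((x - v) + (y + v))"
      using graph_le[OF graph_add[OF that]] by simp
    also have "\<dots> \<le> p (x - v) + p (y + v)"
      by (rule subadditive)
    finally show ?thesis by simp
  qed
  have "A \<noteq> {}" "bdd_above A"
    using graph_zero squeeze[OF _ graph_zero] unfolding A_def bdd_above_def by auto
  show ?thesis
  proof (rule that)
    show "a - p (x - v) \<le> Sup A" if "(x, a) \<in> Gr" for x a
      by (rule cSup_upper[OF _ \<open>bdd_above A\<close>]) (use that A_def in blast)
    show "Sup A \<le> p (x + v) - a" if "(x, a) \<in> Gr" for x a
      by (rule cSup_least[OF \<open>A \<noteq> {}\<close>]) (use squeeze that A_def in blast)
  qed
qed

lemma graph_extension_unique:
  assumes v: "\<And>a. (v, a) \<notin> Gr"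
    and "(z, a) \<in> graph_extension Gr v c" "(z, b) \<in> graph_extension Gr v c"
  shows "a = b"
proof -
  obtain x1 a1 t1 x2 a2 t2 where
    1: "z = x1 + t1 *\<^sub>R v" "a = a1 + t1 * c" "(x1, a1) \<in> Gr" and
    2: "z = x2 + t2 *\<^sub>R v" "b = a2 + t2 * c" "(x2, a2) \<in> Gr"
    using assms(2,3) by (elim graph_extensionE)
  have "t1 = t2"
  proof (rule ccontr)
    assume "t1 \<noteq> t2"
    have "(t1 - t2) *\<^sub>R v = x2 + (-1) *\<^sub>R x1"
      using 1(1) 2(1) by (simp add: algebra_simps)
    then have "(1 / (t1 - t2)) *\<^sub>R ((t1 - t2) *\<^sub>R v) = (1 / (t1 - t2)) *\<^sub>R (x2 + (-1) *\<^sub>R x1)"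
      by simp
    with \<open>t1 \<noteq> t2\<close> have "v = (1 / (t1 - t2)) *\<^sub>R (x2 + (-1) *\<^sub>R x1)"
      by simp
    then show False
      using v graph_scaleR[OF graph_add[OF 2(3) graph_scaleR[OF 1(3)]]] by metis
  qed
  then have "a1 = a2"
    using 1 2 graph_unique by simp
  then show "a = b"
    using 1(2) 2(2) \<open>t1 = t2\<close> by simp
qed

lemma graph_extension_le:
  assumes lower: "\<And>x a. (x, a) \<in> Gr \<Longrightarrow> a - p (x - v) \<le> c"
    and upper: "\<And>x a. (x, a) \<in> Gr \<Longrightarrow> c \<le> p (x + v) - a"
    and "(z, b) \<in> graph_extension Gr v c"
  shows "b \<le> p z"
proof -
  obtain x a t where z: "z = x + t *\<^sub>R v" "b = a + t * c" and xa: "(x, a) \<in> Gr"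
    using assms(3) by (elim graph_extensionE)
  consider "t > 0" | "t = 0" | "t < 0" by linarith
  then show ?thesis
  proof cases
    case 1
    have "c \<le> p ((1 / t) *\<^sub>R x + v) - (1 / t) * a"
      using upper[OF graph_scaleR[OF xa]] .
    then have "b \<le> t * p ((1 / t) *\<^sub>R x + v)"
      using 1 z by (simp add: field_simps)
    also have "\<dots> = p (t *\<^sub>R ((1 / t) *\<^sub>R x + v))"
      by (rule positive_homogeneous[symmetric]) (use 1 in simp)
    also have "t *\<^sub>R ((1 / t) *\<^sub>R x + v) = z"
      using 1 z by (simp add: scaleR_add_right)
    finally show ?thesis .
  next
    case 2
    then show ?thesis using graph_le[OF xa] z by simp
  next
    case 3
    have "(- 1 / t) * a - p ((- 1 / t) *\<^sub>R x - v) \<le> c"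
      using lower[OF graph_scaleR[OF xa]] .
    then have "b \<le> (- t) * p ((- 1 / t) *\<^sub>R x - v)"
      using 3 z by (simp add: field_simps)
    also have "\<dots> = p ((- t) *\<^sub>R ((- 1 / t) *\<^sub>R x - v))"
      by (rule positive_homogeneous[symmetric]) (use 3 in simp)
    also have "(- t) *\<^sub>R ((- 1 / t) *\<^sub>R x - v) = z"
      using 3 z by (simp add: scaleR_diff_right)
    finally show ?thesis .
  qed
qed

lemma dominated_linear_graph_extension:
  assumes v: "\<And>a. (v, a) \<notin> Gr"
    and lower: "\<And>x a. (x, a) \<in> Gr \<Longrightarrow> a - p (x - v) \<le> c"
    and upper: "\<And>x a. (x, a) \<in> Gr \<Longrightarrow> c \<le> p (x + v) - a"
  shows "dominated_linear_graph p (graph_extension Gr v c)"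
  unfolding dominated_linear_graph_def
proof (intro conjI allI impI)
  show "(0, 0) \<in> graph_extension Gr v c"
    using subset_graph_extension graph_zero by blast
next
  fix z1 a z2 b
  assume "(z1, a) \<in> graph_extension Gr v c" "(z2, b) \<in> graph_extension Gr v c"
  then obtain x1 a1 t1 x2 a2 t2 where
    "z1 = x1 + t1 *\<^sub>R v" "a = a1 + t1 * c" "(x1, a1) \<in> Gr"
    "z2 = x2 + t2 *\<^sub>R v" "b = a2 + t2 * c" "(x2, a2) \<in> Gr"
    by (elim graph_extensionE)
  then show "(z1 + z2, a + b) \<in> graph_extension Gr v c"
    using graph_extensionI[OF graph_add, of x1 a1 x2 a2 "t1 + t2"] by (simp add: algebra_simps)
next
  fix k z a
  assume "(z, a) \<in> graph_extension Gr v c"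
  then obtain x a1 t where "z = x + t *\<^sub>R v" "a = a1 + t * c" "(x, a1) \<in> Gr"
    by (elim graph_extensionE)
  then show "(k *\<^sub>R z, k * a) \<in> graph_extension Gr v c"
    using graph_extensionI[OF graph_scaleR, of x a1 k "k * t"] by (simp add: algebra_simps)
qed (use graph_extension_unique[OF v] graph_extension_le[OF lower upper] in blast)+

end

lemma dominated_linear_graph_Union_chain:
  assumes "C \<in> chains {Gr. dominated_linear_graph p Gr}" "C \<noteq> {}"
  shows "dominated_linear_graph p (\<Union>C)"
proof -
  have dom: "dominated_linear_graph p X" if "X \<in> C" for X
    using assms(1) that unfolding chains_def by auto
  have common: "\<exists>X\<in>C. u \<in> X \<and> w \<in> X" if "u \<in> \<Union>C" "w \<in> \<Union>C" for u w
    using assms(1) that unfolding chains_def chain_subset_def by blast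
  show ?thesis
    unfolding dominated_linear_graph_def
  proof (intro conjI allI impI)
    fix x a b assume "(x, a) \<in> \<Union>C" "(x, b) \<in> \<Union>C"
    then obtain X where "X \<in> C" "(x, a) \<in> X" "(x, b) \<in> X" using common by blast
    then show "a = b" using graph_unique[OF dom] by blast
  next
    show "(0, 0) \<in> \<Union>C" using assms(2) graph_zero[OF dom] by blast
  next
    fix x a y b assume "(x, a) \<in> \<Union>C" "(y, b) \<in> \<Union>C"
    then show "(x + y, a + b) \<in> \<Union>C" using common graph_add[OF dom] by blast
  next
    fix c x a assume "(x, a) \<in> \<Union>C"
    then show "(c *\<^sub>R x, c * a) \<in> \<Union>C" using graph_scaleR[OF dom] by blast
  next
    fix x a assume "(x, a) \<in> \<Union>C"
    then show "a \<le> p x" using graph_le[OF dom] by blast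
  qed
qed

lemma dominated_linear_graph_zero: "dominated_linear_graph p {(0, 0)}"
  unfolding dominated_linear_graph_def by simp

lemma exists_dominated_linear_graph_through:
  obtains Gr where "dominated_linear_graph p Gr" "(g, p g) \<in> Gr"
proof (cases "g = 0")
  case True
  then show ?thesis
    using that dominated_linear_graph_zero by simp
next
  case False
  have "0 \<le> p g + p (- g)"
    using subadditive[of g "- g"] by simp
  then have "dominated_linear_graph p (graph_extension {(0, 0)} g (p g))"
    using False by (intro dominated_linear_graph_extension dominated_linear_graph_zero) auto
  moreover have "(g, p g) \<in> graph_extension {(0, 0)} g (p g)"
    using graph_extensionI[of 0 0 "{(0, 0)}" 1 g "p g"] by simp
  ultimately show ?thesis
    by (rule that)
qed

text \<open>A maximal dominated graph through \<open>(g, p g)\<close> (Zorn) is total, as it could otherwise be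
  extended by one dimension.\<close>
lemma exists_total_dominated_linear_graph:
  obtains Gr where "dominated_linear_graph p Gr" "(g, p g) \<in> Gr" "Domain Gr = UNIV"
proof -
  define \<G> where "\<G> = {Gr. dominated_linear_graph p Gr \<and> (g, p g) \<in> Gr}"
  obtain Gr0 where "Gr0 \<in> \<G>"
    using exists_dominated_linear_graph_through unfolding \<G>_def by blast
  moreover have "\<Union>C \<in> \<G>" if C: "C \<in> chains \<G>" "C \<noteq> {}" for C
  proof -
    have "C \<in> chains {Gr. dominated_linear_graph p Gr}"
      using C(1) unfolding chains_def \<G>_def by blast
    then show ?thesis
      using dominated_linear_graph_Union_chain C unfolding \<G>_def chains_def by blast
  qed
  ultimately have "\<forall>C\<in>chains \<G>. \<exists>U\<in>\<G>. \<forall>X\<in>C. X \<subseteq> U"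
    by (metis Union_upper empty_iff)
  from Zorn_Lemma2[OF this] obtain Gr
    where Gr: "Gr \<in> \<G>" and maximal: "\<forall>X\<in>\<G>. Gr \<subseteq> X \<longrightarrow> X = Gr"
    by blast
  then have dom: "dominated_linear_graph p Gr" and g: "(g, p g) \<in> Gr"
    unfolding \<G>_def by auto
  have "\<exists>a. (v, a) \<in> Gr" for v
  proof (rule ccontr)
    assume v: "\<nexists>a. (v, a) \<in> Gr"
    obtain c where c: "\<And>x a. (x, a) \<in> Gr \<Longrightarrow> a - p (x - v) \<le> c"
      "\<And>x a. (x, a) \<in> Gr \<Longrightarrow> c \<le> p (x + v) - a"
      using extension_value_exists[OF dom] by blast
    have "dominated_linear_graph p (graph_extension Gr v c)"
      by (rule dominated_linear_graph_extension[OF dom]) (use v c in auto)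
    moreover have "(g, p g) \<in> graph_extension Gr v c"
      using g subset_graph_extension by blast
    ultimately have "graph_extension Gr v c \<in> \<G>"
      unfolding \<G>_def by blast
    then have "graph_extension Gr v c = Gr"
      using maximal subset_graph_extension[of Gr v c] by blast
    moreover have "(v, c) \<in> graph_extension Gr v c"
      using graph_extensionI[OF graph_zero[OF dom], of 1 v c] by simp
    ultimately show False
      using v by simp
  qed
  then have "Domain Gr = UNIV"
    by (auto intro: DomainI)
  then show ?thesis
    by (rule that[OF dom g])
qed

theorem hahn_banach: "\<exists>\<phi>. linear \<phi> \<and> (\<forall>x. \<phi> x \<le> p x) \<and> \<phi> g = p g"
proof -
  obtain Gr where dom: "dominated_linear_graph p Gr" and g: "(g, p g) \<in> Gr"
    and total: "Domain Gr = UNIV"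
    using exists_total_dominated_linear_graph[of g] .
  define \<phi> where "\<phi> x = (THE a. (x, a) \<in> Gr)" for x
  have \<phi>_eq: "\<phi> x = a" if "(x, a) \<in> Gr" for x a
    unfolding \<phi>_def
    by (rule the_equality[where P = "\<lambda>a. (x, a) \<in> Gr", OF that]) (rule graph_unique[OF dom _ that])
  have graph: "(x, \<phi> x) \<in> Gr" for x
  proof -
    obtain a where "(x, a) \<in> Gr"
      using total by blast
    then show ?thesis
      using \<phi>_eq by simp
  qed
  have "linear \<phi>"
    by (rule linearI)
      (simp_all add: \<phi>_eq[OF graph_add[OF dom graph graph]] \<phi>_eq[OF graph_scaleR[OF dom graph]])
  then show ?thesis
    by (intro exI[of _ \<phi>] conjI allI graph_le[OF dom graph] \<phi>_eq[OF g])
qed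

end

section \<open>The dual of a separable reflexive space is separable\<close>

lemma le_infdist: "A \<noteq> {} \<Longrightarrow> (\<And>a. a \<in> A \<Longrightarrow> t \<le> dist x a) \<Longrightarrow> t \<le> infdist x A"
  by (simp add: infdist_notempty cINF_greatest)

lemma infdist_add_subspace_le:
  fixes F :: "'a::real_normed_vector set"
  assumes F: "subspace F"
  shows "infdist (x + y) F \<le> infdist x F + infdist y F"
proof -
  have ne: "F \<noteq> {}"
    using subspace_0[OF F] by blast
  have "infdist (x + y) F - infdist y F \<le> dist x a" if a: "a \<in> F" for a
  proof -
    have "infdist (x + y) F - dist x a \<le> dist y b" if b: "b \<in> F" for b
    proof -
      have "infdist (x + y) F \<le> dist (x + y) (a + b)"
        using subspace_add[OF F a b] by (rule infdist_le)
      also have "\<dots> \<le> dist x a + dist y b"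
        by (rule dist_triangle_add)
      finally show ?thesis by simp
    qed
    then have "infdist (x + y) F - dist x a \<le> infdist y F"
      by (rule le_infdist[OF ne])
    then show ?thesis by simp
  qed
  then have "infdist (x + y) F - infdist y F \<le> infdist x F"
    by (rule le_infdist[OF ne])
  then show ?thesis
    by simp
qed

lemma infdist_scaleR_subspace_le:
  fixes F :: "'a::real_normed_vector set"
  assumes F: "subspace F" and k: "k > 0"
  shows "infdist (k *\<^sub>R u) F \<le> k * infdist u F"
proof -
  have "infdist (k *\<^sub>R u) F / k \<le> dist u a" if a: "a \<in> F" for a
  proof -
    have "infdist (k *\<^sub>R u) F \<le> dist (k *\<^sub>R u) (k *\<^sub>R a)"
      using subspace_scale[OF F a] by (rule infdist_le)
    also have "\<dots> = k * dist u a"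
      using k by (simp add: dist_norm scaleR_diff_right[symmetric])
    finally show ?thesis
      using k by (simp add: field_simps)
  qed
  then have "infdist (k *\<^sub>R u) F / k \<le> infdist u F"
    using subspace_0[OF F] by (intro le_infdist) auto
  then show ?thesis
    using k by (simp add: field_simps)
qed

lemma infdist_scaleR_subspace:
  fixes F :: "'a::real_normed_vector set"
  assumes F: "subspace F" and "0 \<le> c"
  shows "infdist (c *\<^sub>R x) F = c * infdist x F"
proof (cases "c = 0")
  case True
  then show ?thesis using subspace_0[OF F] by simp
next
  case False
  with \<open>0 \<le> c\<close> have c: "c > 0" by simp
  have "infdist x F = infdist ((1 / c) *\<^sub>R (c *\<^sub>R x)) F"
    using c by simp
  also have "\<dots> \<le> (1 / c) * infdist (c *\<^sub>R x) F"
    using c by (intro infdist_scaleR_subspace_le[OF F]) simp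
  finally have "c * infdist x F \<le> infdist (c *\<^sub>R x) F"
    using c by (simp add: field_simps)
  then show ?thesis
    using infdist_scaleR_subspace_le[OF F c, of x] by simp
qed

lemma sublinear_infdist_subspace:
  fixes F :: "'a::real_normed_vector set"
  assumes "subspace F"
  shows "sublinear (\<lambda>v. infdist v F)"
  using assms by unfold_locales (simp_all add: infdist_add_subspace_le infdist_scaleR_subspace)

lemma bounded_linear_annihilating_subspace:
  fixes F :: "'a::real_normed_vector set"
  assumes F: "subspace F" and g: "g \<notin> closure F"
  obtains \<Phi> :: "'a \<Rightarrow> real" where "bounded_linear \<Phi>" "\<And>v. v \<in> F \<Longrightarrow> \<Phi> v = 0" "\<Phi> g \<noteq> 0"
proof -
  interpret sublinear "\<lambda>v. infdist v F"
    by (rule sublinear_infdist_subspace[OF F])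
  obtain \<Phi> where \<Phi>: "linear \<Phi>" "\<And>v. \<Phi> v \<le> infdist v F" "\<Phi> g = infdist g F"
    using hahn_banach[of g] by blast
  have F_ne: "F \<noteq> {}"
    using subspace_0[OF F] by blast
  have le_norm: "\<Phi> v \<le> norm v" for v
    using \<Phi>(2)[of v] infdist_le[OF subspace_0[OF F], of v] by simp
  have "norm (\<Phi> v) \<le> norm v * 1" for v
    using le_norm[of v] le_norm[of "- v"] linear_neg[OF \<Phi>(1), of v] by auto
  then have "bounded_linear \<Phi>"
    using \<Phi>(1) by (intro bounded_linear_intro[of _ 1]) (auto simp: linear_add linear_scale)
  moreover have "\<Phi> v = 0" if "v \<in> F" for v
    using \<Phi>(2)[of v] \<Phi>(2)[of "- v"] linear_neg[OF \<Phi>(1), of v] that subspace_neg[OF F that]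
    by simp
  moreover have "\<Phi> g \<noteq> 0"
    using \<Phi>(3) g in_closure_iff_infdist_zero[OF F_ne] by simp
  ultimately show ?thesis
    by (rule that)
qed

lemma exists_almost_norming_functional:
  fixes y :: "'a::real_normed_vector"
  obtains h :: "'a \<Rightarrow>\<^sub>L real"
  where "norm h \<le> 1" "\<And>f::'a \<Rightarrow>\<^sub>L real. norm f \<le> 1 \<Longrightarrow> blinfun_apply f y \<le> 2 * blinfun_apply h y"
proof -
  define A where "A = {blinfun_apply f y | f :: 'a \<Rightarrow>\<^sub>L real. norm f \<le> 1}"
  have "blinfun_apply f y \<le> norm y" if "norm f \<le> 1" for f :: "'a \<Rightarrow>\<^sub>L real"
    using norm_blinfun[of f y] mult_right_mono[OF that norm_ge_zero[of y]] by simp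
  then have bdd: "bdd_above A"
    unfolding A_def bdd_above_def by blast
  have ne: "A \<noteq> {}"
    unfolding A_def by (auto intro!: exI[of _ 0])
  have up: "blinfun_apply f y \<le> Sup A" if "norm f \<le> 1" for f :: "'a \<Rightarrow>\<^sub>L real"
    by (rule cSup_upper[OF _ bdd]) (use that A_def in blast)
  show ?thesis
  proof (cases "Sup A > 0")
    case True
    then have "Sup A / 2 < Sup A" by simp
    then obtain h :: "'a \<Rightarrow>\<^sub>L real" where "norm h \<le> 1" "Sup A / 2 < blinfun_apply h y"
      using less_cSup_iff[OF ne bdd] unfolding A_def by blast
    then show ?thesis
      using that up by fastforce
  next
    case False
    then show ?thesis
      using that[of 0] up by fastforce
  qed
qed

lemma separable_type_dense_sequence:
  assumes "separable_type TYPE('a::metric_space)"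
  obtains zs :: "nat \<Rightarrow> 'a::metric_space" where "closure (range zs) = UNIV"
proof -
  obtain D :: "'a set" where D: "countable D" "closure D = UNIV"
    using assms unfolding separable_type_def separable_space_def by auto
  then have "D \<noteq> {}" by auto
  then have "range (from_nat_into D) = D"
    using D(1) by (rule range_from_nat_into)
  then show ?thesis
    using that D(2) by metis
qed

text \<open>For \<open>norm f \<le> 1\<close> and \<open>ys k\<close> close to \<open>w\<close>:
  \<open>f w \<approx> f (ys k) \<le> 2 * hs k (ys k) \<approx> 2 * hs k w = 0\<close>.\<close>
lemma functional_vanishes_where_norming_family_vanishes:
  fixes ys :: "nat \<Rightarrow> 'a::real_normed_vector" and hs :: "nat \<Rightarrow> 'a \<Rightarrow>\<^sub>L real"
    and f :: "'a \<Rightarrow>\<^sub>L real"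
  assumes ys: "closure (range ys) = UNIV"
    and hs_norm: "\<And>k. norm (hs k) \<le> 1"
    and hs_norming: "\<And>k f. norm f \<le> 1 \<Longrightarrow> blinfun_apply f (ys k) \<le> 2 * blinfun_apply (hs k) (ys k)"
    and hs_w: "\<And>k. blinfun_apply (hs k) w = 0"
  shows "blinfun_apply f w = 0"
proof -
  have dist_bound: "\<bar>h u - h v\<bar> \<le> dist u v" if "norm h \<le> 1" for h :: "'a \<Rightarrow>\<^sub>L real" and u v
    using norm_blinfun[of h "u - v"] mult_right_mono[OF that norm_ge_zero[of "u - v"]]
    by (simp add: blinfun.diff_right dist_norm)
  have nonpos: "f w \<le> 0" if f: "norm f \<le> 1" for f :: "'a \<Rightarrow>\<^sub>L real"
  proof (rule field_le_epsilon)
    fix e :: real assume "e > 0"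
    then have "e / 3 > 0" by simp
    then obtain y where "y \<in> range ys" "dist y w < e / 3"
      using ys closure_approachable[of w "range ys"] by blast
    then obtain k where k: "dist (ys k) w < e / 3" by blast
    show "f w \<le> 0 + e"
      using dist_bound[OF f, of w "ys k"] dist_bound[OF hs_norm[of k], of "ys k" w]
        hs_norming[OF f, of k] hs_w[of k] k
      by (simp add: dist_commute)
  qed
  show ?thesis
  proof (cases "f = 0")
    case False
    then have "norm (inverse (norm f) *\<^sub>R f) \<le> 1" "norm (inverse (norm f) *\<^sub>R (- f)) \<le> 1"
      by simp_all
    from nonpos[OF this(1)] nonpos[OF this(2)] False show ?thesis
      by (simp add: blinfun.scaleR_left blinfun.minus_left zero_le_mult_iff mult_le_0_iff)
  qed simp
qed

text \<open>A functional on the dual that vanishes on the closed span of the countable family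
  is evaluation at some \<open>w\<close> by reflexivity, and then it kills every functional.\<close>
theorem separable_reflexive_dual:
  assumes sep: "separable_type TYPE('a::real_normed_vector)"
    and refl: "reflexive_type TYPE('a)"
  obtains fs :: "nat \<Rightarrow> ('a::real_normed_vector \<Rightarrow>\<^sub>L real)" where "closure (span (range fs)) = UNIV"
proof -
  obtain ys :: "nat \<Rightarrow> 'a" where ys: "closure (range ys) = UNIV"
    using separable_type_dense_sequence[OF sep] .
  have "\<forall>k. \<exists>h :: 'a \<Rightarrow>\<^sub>L real. norm h \<le> 1 \<and>
      (\<forall>f :: 'a \<Rightarrow>\<^sub>L real. norm f \<le> 1 \<longrightarrow> blinfun_apply f (ys k) \<le> 2 * blinfun_apply h (ys k))"
    by (metis exists_almost_norming_functional)
  then obtain hs :: "nat \<Rightarrow> 'a \<Rightarrow>\<^sub>L real" where hs: "\<And>k. norm (hs k) \<le> 1"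
    "\<And>k (f :: 'a \<Rightarrow>\<^sub>L real). norm f \<le> 1 \<Longrightarrow> blinfun_apply f (ys k) \<le> 2 * blinfun_apply (hs k) (ys k)"
    by metis
  have "g \<in> closure (span (range hs))" for g :: "'a \<Rightarrow>\<^sub>L real"
  proof (rule ccontr)
    assume "g \<notin> closure (span (range hs))"
    then obtain \<Phi> :: "('a \<Rightarrow>\<^sub>L real) \<Rightarrow> real"
      where \<Phi>: "bounded_linear \<Phi>" "\<And>f. f \<in> span (range hs) \<Longrightarrow> \<Phi> f = 0" "\<Phi> g \<noteq> 0"
      using bounded_linear_annihilating_subspace[of "span (range hs)" g] by auto
    obtain w :: 'a where "\<And>f. blinfun_apply (Blinfun \<Phi>) f = f w"
      using refl unfolding reflexive_type_def by blast
    then have w: "\<Phi> f = f w" for f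
      using bounded_linear_Blinfun_apply[OF \<Phi>(1)] by simp
    have "hs k w = 0" for k
      using \<Phi>(2)[of "hs k"] w by (simp add: span_base)
    then have "g w = 0"
      using functional_vanishes_where_norming_family_vanishes[OF ys hs(1) hs(2)] by blast
    then show False
      using \<Phi>(3) w by simp
  qed
  then show ?thesis
    using that by blast
qed

section \<open>Gateaux derivatives and weak operator convergence\<close>

lemma gateaux_deriv_unique:
  assumes "gateaux_deriv S y G1" "gateaux_deriv S y G2"
  shows "G1 = G2"
proof (rule blinfun_eqI)
  fix z
  show "blinfun_apply G1 z = blinfun_apply G2 z"
    using assms unfolding gateaux_deriv_def
    by (blast intro: tendsto_unique[OF trivial_limit_at_right_real])
qed

lemma gateaux_deriv_gateaux_derivative:
  assumes "y \<in> gateaux_points S"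
  shows "gateaux_deriv S y (gateaux_derivative S y)"
proof -
  obtain G where G: "gateaux_deriv S y G"
    using assms unfolding gateaux_points_def by blast
  then have "gateaux_derivative S y = G"
    unfolding gateaux_derivative_def using gateaux_deriv_unique by blast
  then show ?thesis
    using G by simp
qed

lemma norm_gateaux_deriv_le:
  assumes lip: "C-lipschitz_on U S" and U: "open U" "y \<in> U"
    and G: "gateaux_deriv S y G"
  shows "norm G \<le> C"
proof (rule norm_blinfun_bound)
  show "0 \<le> C"
    using lip by (rule lipschitz_on_nonneg)
  fix z
  have "((\<lambda>t. y + t *\<^sub>R z) \<longlongrightarrow> y) (at_right (0::real))"
    by (auto intro!: tendsto_eq_intros)
  then have "eventually (\<lambda>t. y + t *\<^sub>R z \<in> U) (at_right 0)"
    using U by (rule topological_tendstoD)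
  then have "eventually (\<lambda>t. norm ((1 / t) *\<^sub>R (S (y + t *\<^sub>R z) - S y)) \<le> C * norm z) (at_right 0)"
    using eventually_at_right_less[of 0]
  proof eventually_elim
    case (elim t)
    have "norm (S (y + t *\<^sub>R z) - S y) \<le> C * (t * norm z)"
      using lipschitz_onD[OF lip, of "y + t *\<^sub>R z" y] U elim by (simp add: dist_norm)
    then have "norm (S (y + t *\<^sub>R z) - S y) / t \<le> C * norm z"
      using elim by (simp add: pos_divide_le_eq ac_simps)
    then show ?case
      using elim by (simp only: norm_scaleR) simp
  qed
  then show "norm (blinfun_apply G z) \<le> C * norm z"
    using G unfolding gateaux_deriv_def
    by (blast intro: Lim_norm_ubound[OF trivial_limit_at_right_real])
qed

lemma tendsto_closure_uniformly_bounded: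
  fixes \<phi>s :: "nat \<Rightarrow> 'a::real_normed_vector \<Rightarrow> 'b::real_normed_vector"
  assumes lin: "\<And>n. linear (\<phi>s n)" and bl: "bounded_linear \<phi>"
    and bound: "eventually (\<lambda>n. \<forall>v. norm (\<phi>s n v) \<le> B * norm v) sequentially"
    and v: "v \<in> closure {u. (\<lambda>n. \<phi>s n u) \<longlonglongrightarrow> \<phi> u}"
  shows "(\<lambda>n. \<phi>s n v) \<longlonglongrightarrow> \<phi> v"
proof (rule tendstoI)
  interpret \<phi>: bounded_linear \<phi> by (rule bl)
  obtain K where K: "K > 0" "\<And>u. norm (\<phi> u) \<le> norm u * K"
    using \<phi>.pos_bounded by blast
  fix e :: real assume "e > 0"
  define d where "d = e / (2 * (\<bar>B\<bar> + K + 1))"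
  have d: "d > 0" "(\<bar>B\<bar> + K) * d < e / 2"
    using \<open>e > 0\<close> K(1) by (auto simp: d_def field_simps)
  obtain u where u: "(\<lambda>n. \<phi>s n u) \<longlonglongrightarrow> \<phi> u" "norm (v - u) < d"
    using v d(1) closure_approachable[of v] by (auto simp: dist_norm norm_minus_commute)
  have "eventually (\<lambda>n. dist (\<phi>s n u) (\<phi> u) < e / 2) sequentially"
    using u(1) \<open>e > 0\<close> by (intro tendstoD) auto
  then show "eventually (\<lambda>n. dist (\<phi>s n v) (\<phi> v) < e) sequentially"
    using bound
  proof eventually_elim
    case (elim n)
    have "dist (\<phi>s n v) (\<phi> v) = norm (\<phi>s n (v - u) + (\<phi>s n u - \<phi> u) + \<phi> (u - v))"
      using linear_diff[OF lin] \<phi>.diff by (simp add: dist_norm)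
    also have "\<dots> \<le> norm (\<phi>s n (v - u)) + norm (\<phi>s n u - \<phi> u) + norm (\<phi> (u - v))"
      by (rule order_trans[OF norm_triangle_ineq add_right_mono[OF norm_triangle_ineq]])
    also have "norm (\<phi>s n (v - u)) \<le> \<bar>B\<bar> * d"
    proof -
      have "norm (\<phi>s n (v - u)) \<le> B * norm (v - u)"
        using elim(2) by blast
      also have "\<dots> \<le> \<bar>B\<bar> * d"
        using u(2) by (intro mult_mono) auto
      finally show ?thesis .
    qed
    also have "norm (\<phi> (u - v)) \<le> d * K"
    proof -
      have "norm (u - v) \<le> d"
        using u(2) by (simp add: norm_minus_commute)
      then show ?thesis
        using order_trans[OF K(2) mult_right_mono] K(1) by simp
    qed
    also have "norm (\<phi>s n u - \<phi> u) < e / 2"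
      using elim(1) by (simp add: dist_norm)
    finally show ?case
      using d(2) by (simp add: algebra_simps)
  qed
qed

lemma tendsto_closure_span_uniformly_bounded:
  fixes \<phi>s :: "nat \<Rightarrow> 'a::real_normed_vector \<Rightarrow> 'b::real_normed_vector"
  assumes lin: "\<And>n. linear (\<phi>s n)" and bl: "bounded_linear \<phi>"
    and bound: "eventually (\<lambda>n. \<forall>v. norm (\<phi>s n v) \<le> B * norm v) sequentially"
    and D: "\<And>d. d \<in> D \<Longrightarrow> (\<lambda>n. \<phi>s n d) \<longlonglongrightarrow> \<phi> d"
    and v: "v \<in> closure (span D)"
  shows "(\<lambda>n. \<phi>s n v) \<longlonglongrightarrow> \<phi> v"
proof (rule tendsto_closure_uniformly_bounded[OF lin bl bound])
  interpret \<phi>: bounded_linear \<phi> by (rule bl)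
  have "subspace {u. (\<lambda>n. \<phi>s n u) \<longlonglongrightarrow> \<phi> u}"
    unfolding subspace_def
    using linear_0[OF lin] linear_add[OF lin] linear_scale[OF lin]
    by (auto intro: tendsto_add tendsto_scaleR simp: \<phi>.add \<phi>.scaleR)
  then have "span D \<subseteq> {u. (\<lambda>n. \<phi>s n u) \<longlonglongrightarrow> \<phi> u}"
    using D by (intro span_minimal) auto
  then show "v \<in> closure {u. (\<lambda>n. \<phi>s n u) \<longlonglongrightarrow> \<phi> u}"
    using v closure_mono by blast
qed

lemma wot_tendsto_of_dense:
  fixes Ds :: "nat \<Rightarrow> 'x::real_normed_vector \<Rightarrow>\<^sub>L 'y::real_normed_vector"
    and G :: "'x \<Rightarrow>\<^sub>L 'y" and zs :: "nat \<Rightarrow> 'x" and fs :: "nat \<Rightarrow> 'y \<Rightarrow>\<^sub>L real"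
  assumes zs: "closure (range zs) = UNIV" and fs: "closure (span (range fs)) = UNIV"
    and bound: "eventually (\<lambda>n. norm (Ds n) \<le> C) sequentially"
    and conv: "\<And>i k. (\<lambda>n. fs k (Ds n (zs i))) \<longlonglongrightarrow> fs k (G (zs i))"
  shows "wot_tendsto Ds G"
proof -
  have norm_bound: "norm (f (Ds n z)) \<le> C * norm z * norm f" "norm (f (Ds n z)) \<le> C * norm f * norm z"
    if "norm (Ds n) \<le> C" for f :: "'y \<Rightarrow>\<^sub>L real" and n z
  proof -
    have "norm (f (Ds n z)) \<le> norm f * (norm (Ds n) * norm z)"
      by (rule order_trans[OF norm_blinfun mult_left_mono[OF norm_blinfun norm_ge_zero]])
    also have "\<dots> \<le> norm f * (C * norm z)"
      using that by (intro mult_left_mono mult_right_mono) auto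
    finally show "norm (f (Ds n z)) \<le> C * norm z * norm f" "norm (f (Ds n z)) \<le> C * norm f * norm z"
      by (simp_all add: ac_simps)
  qed
  have at_dense: "(\<lambda>n. f (Ds n (zs i))) \<longlonglongrightarrow> f (G (zs i))" for f :: "'y \<Rightarrow>\<^sub>L real" and i
  proof (rule tendsto_closure_span_uniformly_bounded[where D = "range fs" and B = "C * norm (zs i)"
        and \<phi>s = "\<lambda>n f. blinfun_apply f (Ds n (zs i))" and \<phi> = "\<lambda>f. blinfun_apply f (G (zs i))"])
    show "eventually (\<lambda>n. \<forall>f :: 'y \<Rightarrow>\<^sub>L real. norm (blinfun_apply f (Ds n (zs i))) \<le> C * norm (zs i) * norm f)
      sequentially"
      using bound by eventually_elim (use norm_bound(1) in blast)
  qed (use conv fs in \<open>auto simp: blinfun.bounded_linear_left bounded_linear.linear\<close>)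
  have "(\<lambda>n. f (Ds n z)) \<longlonglongrightarrow> f (G z)" for f :: "'y \<Rightarrow>\<^sub>L real" and z
  proof (rule tendsto_closure_span_uniformly_bounded[where D = "range zs" and B = "C * norm f"
        and \<phi>s = "\<lambda>n z. blinfun_apply f (Ds n z)" and \<phi> = "\<lambda>z. blinfun_apply f (G z)"])
    show "eventually (\<lambda>n. \<forall>z. norm (blinfun_apply f (Ds n z)) \<le> C * norm f * norm z) sequentially"
      using bound by eventually_elim (use norm_bound(2) in blast)
    show "z \<in> closure (span (range zs))"
      using zs closure_mono[OF span_superset[of "range zs"]] by auto
  qed (use at_dense in \<open>auto intro: bounded_linear_compose blinfun.bounded_linear_right
        bounded_linear.linear\<close>)
  then show ?thesis
    unfolding wot_tendsto_def weakly_tendsto_def by blast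
qed

section \<open>Closedness of the strong-weak Bouligand differential\<close>

lemma bouligand_sw_approximation:
  fixes S :: "'x::real_normed_vector \<Rightarrow> 'y::real_normed_vector"
    and Z :: "'x set" and F :: "('y \<Rightarrow>\<^sub>L real) set"
  assumes "G \<in> bouligand_sw S y" "finite Z" "finite F" "e > 0"
  obtains y' where "y' \<in> gateaux_points S" "norm (y' - y) < e"
    "\<forall>z\<in>Z. \<forall>f\<in>F. \<bar>f (gateaux_derivative S y' z) - f (G z)\<bar> < e"
proof -
  obtain X where X: "\<And>m. X m \<in> gateaux_points S" "X \<longlonglongrightarrow> y"
    and wot: "wot_tendsto (\<lambda>m. gateaux_derivative S (X m)) G"
    using assms(1) unfolding bouligand_sw_def by blast
  have "eventually (\<lambda>m. norm (X m - y) < e) sequentially"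
    using tendstoD[OF X(2) assms(4)] by (simp add: dist_norm)
  moreover have "eventually (\<lambda>m. \<forall>z\<in>Z. \<forall>f\<in>F.
      \<bar>f (gateaux_derivative S (X m) z) - f (G z)\<bar> < e) sequentially"
  proof (intro eventually_ball_finite ballI assms(2,3))
    fix z and f :: "'y \<Rightarrow>\<^sub>L real"
    have "(\<lambda>m. f (gateaux_derivative S (X m) z)) \<longlonglongrightarrow> f (G z)"
      using wot unfolding wot_tendsto_def weakly_tendsto_def by blast
    from tendstoD[OF this assms(4)]
    show "eventually (\<lambda>m. \<bar>f (gateaux_derivative S (X m) z) - f (G z)\<bar> < e) sequentially"
      by (simp add: dist_real_def)
  qed
  ultimately obtain m where "norm (X m - y) < e"
    "\<forall>z\<in>Z. \<forall>f\<in>F. \<bar>f (gateaux_derivative S (X m) z) - f (G z)\<bar> < e"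
    using eventually_happens'[OF sequentially_bot eventually_conj] by blast
  then show ?thesis
    using that X(1) by blast
qed

text \<open>The \<open>n\<close>-th point is \<open>1/(n+1)\<close>-close to \<open>xs n\<close>, and its derivative is
  \<open>1/(n+1)\<close>-close to \<open>Gs n\<close> on the first \<open>n+1\<close> test vectors and test functionals.\<close>
lemma bouligand_sw_diagonal:
  fixes S :: "'x::real_normed_vector \<Rightarrow> 'y::real_normed_vector"
    and Gs :: "nat \<Rightarrow> 'x \<Rightarrow>\<^sub>L 'y" and zs :: "nat \<Rightarrow> 'x" and fs :: "nat \<Rightarrow> 'y \<Rightarrow>\<^sub>L real"
  assumes "\<And>n. Gs n \<in> bouligand_sw S (xs n)"
  obtains xt where "range xt \<subseteq> gateaux_points S" "(\<lambda>n. xt n - xs n) \<longlonglongrightarrow> 0"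
    "\<forall>i k. (\<lambda>n. fs k (gateaux_derivative S (xt n) (zs i)) - fs k (Gs n (zs i))) \<longlonglongrightarrow> 0"
proof -
  define e where "e n = inverse (real (Suc n))" for n
  have "\<exists>y. y \<in> gateaux_points S \<and> norm (y - xs n) < e n \<and>
    (\<forall>z\<in>zs ` {..n}. \<forall>f\<in>fs ` {..n}. \<bar>f (gateaux_derivative S y z) - f (Gs n z)\<bar> < e n)" for n
  proof -
    have "e n > 0"
      by (simp add: e_def)
    then obtain y where "y \<in> gateaux_points S" "norm (y - xs n) < e n"
      "\<forall>z\<in>zs ` {..n}. \<forall>f\<in>fs ` {..n}. \<bar>f (gateaux_derivative S y z) - f (Gs n z)\<bar> < e n"
      by (rule bouligand_sw_approximation[OF assms finite_imageI finite_imageI, OF finite_atMost finite_atMost])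
    then show ?thesis
      by blast
  qed
  then obtain xt where xt: "\<And>n. xt n \<in> gateaux_points S" "\<And>n. norm (xt n - xs n) < e n"
    and close: "\<And>n i k. i \<le> n \<Longrightarrow> k \<le> n \<Longrightarrow>
      \<bar>fs k (gateaux_derivative S (xt n) (zs i)) - fs k (Gs n (zs i))\<bar> < e n"
    by (metis atMost_iff image_eqI)
  have e_0: "e \<longlonglongrightarrow> 0"
    unfolding e_def by (rule LIMSEQ_inverse_real_of_nat)
  show ?thesis
  proof (rule that)
    show "range xt \<subseteq> gateaux_points S"
      using xt(1) by blast
    show "(\<lambda>n. xt n - xs n) \<longlonglongrightarrow> 0"
      using xt(2) by (intro Lim_null_comparison[OF _ e_0] always_eventually allI less_imp_le)
    show "\<forall>i k. (\<lambda>n. fs k (gateaux_derivative S (xt n) (zs i)) - fs k (Gs n (zs i))) \<longlonglongrightarrow> 0"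
    proof (intro allI Lim_null_comparison[OF _ e_0])
      fix i k
      show "eventually (\<lambda>n. norm (fs k (gateaux_derivative S (xt n) (zs i)) - fs k (Gs n (zs i))) \<le> e n)
        sequentially"
        using eventually_ge_at_top[of "max i k"] by eventually_elim (use close in \<open>simp add: less_imp_le\<close>)
    qed
  qed
qed

lemma standing_assumptions_lipschitz:
  assumes "standing_assumptions M q r \<iota> j S"
  obtains C \<epsilon> where "\<epsilon> > 0" "C-lipschitz_on (cball x \<epsilon>) S"
proof -
  have "\<exists>C>0. \<exists>\<epsilon>>0. \<forall>x1 x2. norm (x1 - x) \<le> \<epsilon> \<and> norm (x2 - x) \<le> \<epsilon> \<longrightarrow>
      norm (S x1 - S x2) \<le> C * norm (x1 - x2)"
    using assms unfolding standing_assumptions_def by (elim conjE) (drule spec[of _ x], blast)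
  then obtain C \<epsilon> where "\<epsilon> > 0" and "\<And>x1 x2. norm (x1 - x) \<le> \<epsilon> \<Longrightarrow> norm (x2 - x) \<le> \<epsilon> \<Longrightarrow>
      norm (S x1 - S x2) \<le> C * norm (x1 - x2)" and "C > 0"
    by blast
  then have "C-lipschitz_on (cball x \<epsilon>) S"
    by (intro lipschitz_onI) (auto simp: dist_norm norm_minus_commute)
  then show ?thesis
    using that \<open>\<epsilon> > 0\<close> by blast
qed

lemma standing_assumptions_derivatives_bounded:
  assumes "standing_assumptions M q r \<iota> j S"
    and "xt \<longlonglongrightarrow> x" "range xt \<subseteq> gateaux_points S"
  obtains C where "eventually (\<lambda>n. norm (gateaux_derivative S (xt n)) \<le> C) sequentially"
proof -
  obtain C \<epsilon> where "\<epsilon> > 0" and lip: "C-lipschitz_on (cball x \<epsilon>) S"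
    using standing_assumptions_lipschitz[OF assms(1)] .
  have "eventually (\<lambda>n. xt n \<in> ball x \<epsilon>) sequentially"
    using assms(2) \<open>\<epsilon> > 0\<close> by (intro topological_tendstoD) auto
  then have "eventually (\<lambda>n. norm (gateaux_derivative S (xt n)) \<le> C) sequentially"
  proof eventually_elim
    case (elim n)
    show ?case
      by (rule norm_gateaux_deriv_le[OF lipschitz_on_subset[OF lip ball_subset_cball] open_ball elim
            gateaux_deriv_gateaux_derivative]) (use assms(3) in blast)
  qed
  then show ?thesis
    by (rule that)
qed

lemma standing_assumptions_test_families:
  assumes "standing_assumptions M q r \<iota> j (S :: 'x::banach \<Rightarrow> 'y::banach)"
  obtains zs :: "nat \<Rightarrow> 'x::banach" and fs :: "nat \<Rightarrow> 'y::banach \<Rightarrow>\<^sub>L real"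
  where "closure (range zs) = UNIV" "closure (span (range fs)) = UNIV"
proof -
  have "separable_type TYPE('x)" "separable_type TYPE('y)" "reflexive_type TYPE('y)"
    using assms unfolding standing_assumptions_def by simp_all
  then show ?thesis
    using that separable_type_dense_sequence separable_reflexive_dual by metis
qed

theorem mainTheorem3:
  fixes M :: "'w measure" and q r :: ennreal
    and \<iota> :: "'y::banach \<Rightarrow> 'w \<Rightarrow> real" and j :: "'u::banach \<Rightarrow> 'x::banach"
    and S :: "'x \<Rightarrow> 'y"
    and xs :: "nat \<Rightarrow> 'x" and x :: 'x
    and Gs :: "nat \<Rightarrow> ('x \<Rightarrow>\<^sub>L 'y)" and G :: "'x \<Rightarrow>\<^sub>L 'y"
  assumes "standing_assumptions M q r \<iota> j S"
    and "xs \<longlonglongrightarrow> x"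
    and "\<And>n. Gs n \<in> bouligand_sw S (xs n)"
    and "wot_tendsto Gs G"
  shows "G \<in> bouligand_sw S x"
proof -
  obtain zs :: "nat \<Rightarrow> 'x" and fs :: "nat \<Rightarrow> 'y \<Rightarrow>\<^sub>L real"
    where zs: "closure (range zs) = UNIV" and fs: "closure (span (range fs)) = UNIV"
    using standing_assumptions_test_families[OF assms(1)] .
  obtain xt where xt: "range xt \<subseteq> gateaux_points S" "(\<lambda>n. xt n - xs n) \<longlonglongrightarrow> 0"
    and deriv: "\<forall>i k. (\<lambda>n. fs k (gateaux_derivative S (xt n) (zs i)) - fs k (Gs n (zs i))) \<longlonglongrightarrow> 0"
    using bouligand_sw_diagonal[where Gs = Gs and xs = xs and zs = zs and fs = fs, OF assms(3)] .
  have "xt \<longlonglongrightarrow> x"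
    using tendsto_add[OF xt(2) assms(2)] by simp
  then obtain C where "eventually (\<lambda>n. norm (gateaux_derivative S (xt n)) \<le> C) sequentially"
    using standing_assumptions_derivatives_bounded[OF assms(1) _ xt(1)] by blast
  moreover have "(\<lambda>n. fs k (gateaux_derivative S (xt n) (zs i))) \<longlonglongrightarrow> fs k (G (zs i))" for i k
  proof -
    have "(\<lambda>n. fs k (Gs n (zs i))) \<longlonglongrightarrow> fs k (G (zs i))"
      using assms(4) unfolding wot_tendsto_def weakly_tendsto_def by blast
    from tendsto_add[OF deriv[THEN spec[of _ i], THEN spec[of _ k]] this] show ?thesis
      by simp
  qed
  ultimately have "wot_tendsto (\<lambda>n. gateaux_derivative S (xt n)) G"
    by (rule wot_tendsto_of_dense[OF zs fs])
  then show ?thesis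
    unfolding bouligand_sw_def using xt(1) \<open>xt \<longlonglongrightarrow> x\<close> by blast
qed

end
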